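(* Let $m,d,\ell\ge1$, $n\ge2$ a power of two, $N\ge2$, $t>0$, and let $f\colon[N]^m\to\{0,1\}^{\ell\log n+(\ell+1)n}$ be $d$-local. Let $S\subseteq[m]$ be the set of input coordinates that either affect more than $t$ output bits of $f$ or affect at least one of the first $\ell\log n$ output bits. Then the fraction of shift vectors $i\in(\{0,1\}^{\log n})^\ell$ that are bad (with respect to $f$, $S$) is at most $4d\big(\frac{t}{\ell n}\big)^{\ell}$.
   Context: A function is $d$-local if each output bit depends on at most $d$ input coordinates; an input coordinate "affects" an output bit if that bit depends on it. The $\ell\log n+(\ell+1)n$ output bits of $f$ are named, in order, $\mathbf{i}^{(1)},\dots,\mathbf{i}^{(\ell)}$ (each a block of $\log n$ bits), then $\mathbf{x}=(\mathbf{x}_1,\dots,\mathbf{x}_n)$, then $\mathbf{y}^{(1)},\dots,\mathbf{y}^{(\ell)}$ (each in $\{0,1\}^n$). Elements $i^{(j)}\in\{0,1\}^{\log n}$ are identified with elements of $\mathbb{Z}_n$, and indices of $\mathbf{x},\mathbf{y}^{(j)}$ are taken modulo $n$. For a shift vector $i=(i^{(1)},\dots,i^{(\ell)})\in(\{0,1\}^{\log n})^\ell$ and $u\in[n]$, the equality block $B_u(i)$ is the set of $\ell+1$ output positions $(\mathbf{x}_u,\mathbf{y}^{(1)}_{u-i^{(1)}},\dots,\mathbf{y}^{(\ell)}_{u-i^{(\ell)}})$. A block is covered if some input coordinate $c\notin S$ affects every output bit in the block. A shift vector $i$ is bad if at least $n/4$ of the blocks $B_u(i)$, $u\in[n]$,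 are covered. *)

theory Defs
  imports "HOL-Analysis.Analysis"
begin

text \<open>Outputs: bit-strings of length L,
  represented as functions nat => bool (bit p for p < L). Output positions are 0-based.\<close>

definition inputs :: "nat \<Rightarrow> nat \<Rightarrow> (nat \<Rightarrow> nat) set" where
  "inputs N m = PiE {0..<m} (\<lambda>_. {0..<N})"

definition affects :: "nat \<Rightarrow> nat \<Rightarrow> ((nat \<Rightarrow> nat) \<Rightarrow> nat \<Rightarrow> bool) \<Rightarrow> nat \<Rightarrow> nat \<Rightarrow> bool" where
  "affects N m f c p \<longleftrightarrow> c < m \<and>
     (\<exists>x\<in>inputs N m. \<exists>v<N. f x p \<noteq> f (x(c := v)) p)"

definition local_fun :: "nat \<Rightarrow> nat \<Rightarrow> nat \<Rightarrow> nat \<Rightarrow> ((nat \<Rightarrow> nat) \<Rightarrow> nat \<Rightarrow> bool) \<Rightarrow> bool" where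
  "local_fun d N m L f \<longleftrightarrow> (\<forall>p<L. card {c. affects N m f c p} \<le> d)"

text \<open>Output layout with k = log n: blocks i^(1..l) at positions [0, l*k);
  x_u (u = 0..n-1) at position l*k + u; y^(j)_w (j = 0..l-1, w = 0..n-1) at
  position l*k + n + j*n + w.\<close>

definition x_pos :: "nat \<Rightarrow> nat \<Rightarrow> nat \<Rightarrow> nat \<Rightarrow> nat" where
  "x_pos l k n u = l * k + u"

definition y_pos :: "nat \<Rightarrow> nat \<Rightarrow> nat \<Rightarrow> nat \<Rightarrow> nat \<Rightarrow> nat" where
  "y_pos l k n j w = l * k + n + j * n + w"

definition eq_block :: "nat \<Rightarrow> nat \<Rightarrow> nat \<Rightarrow> (nat \<Rightarrow> nat) \<Rightarrow> nat \<Rightarrow> nat set" where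
  "eq_block l k n i u =
     insert (x_pos l k n u)
       ((\<lambda>j. y_pos l k n j (nat ((int u - int (i j)) mod int n))) ` {0..<l})"

definition shift_vectors :: "nat \<Rightarrow> nat \<Rightarrow> (nat \<Rightarrow> nat) set" where
  "shift_vectors l n = PiE {0..<l} (\<lambda>_. {0..<n})"

definition covered :: "nat \<Rightarrow> nat \<Rightarrow> ((nat \<Rightarrow> nat) \<Rightarrow> nat \<Rightarrow> bool) \<Rightarrow> nat set \<Rightarrow> nat set \<Rightarrow> bool" where
  "covered N m f S B \<longleftrightarrow> (\<exists>c. c < m \<and> c \<notin> S \<and> (\<forall>p\<in>B. affects N m f c p))"

definition bad_shift :: "nat \<Rightarrow> nat \<Rightarrow> ((nat \<Rightarrow> nat) \<Rightarrow> nat \<Rightarrow> bool) \<Rightarrow> nat set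
     \<Rightarrow> nat \<Rightarrow> nat \<Rightarrow> nat \<Rightarrow> (nat \<Rightarrow> nat) \<Rightarrow> bool" where
  "bad_shift N m f S l k n i \<longleftrightarrow>
     real (card {u\<in>{0..<n}. covered N m f S (eq_block l k n i u)}) \<ge> real n / 4"

end

theory Submission
  imports Defs
begin

text \<open>Fix a position u. A coordinate c \<notin> S covering B_u(i) must affect x_u, and by
  d-locality at most d coordinates do. For such a c, the shift vectors i with B_u(i) inside
  the bits affected by c form a product set whose j-th factor is a cyclic shift of the set of
  bits of y^(j) affected by c; its size is a product of l numbers with sum at most t, hence at
  most (t/l)^l by AM-GM. Summing over u, the pairs (i, u) with B_u(i) covered number at most
  n d (t/l)^l, and averaging over the n^l shift vectors at threshold n/4 gives the bound.
  Only the bound t on the number of bits affected by c \<notin> S is used: the index bits and the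
  assumption that n is a power of two play no role.\<close>

lemma prod_le_mean_power:
  fixes x :: "'a \<Rightarrow> real"
  assumes "finite A" "A \<noteq> {}" "\<And>a. a \<in> A \<Longrightarrow> x a \<ge> 0" "sum x A \<le> s"
  shows "prod x A \<le> (s / card A) ^ card A"
proof -
  have card_pos: "card A > 0" using assms(1,2) by (simp add: card_gt_0_iff)
  have "prod x A powr (1 / card A) \<le> (\<Sum>a\<in>A. x a / card A)"
    using arith_geom_mean[OF assms(1,2)] assms(3) by blast
  also have "\<dots> \<le> s / card A"
    using assms(4) card_pos by (simp add: sum_divide_distrib[symmetric] divide_right_mono)
  finally have root_le: "prod x A powr (1 / card A) \<le> s / card A" .
  have "prod x A = (prod x A powr (1 / card A)) ^ card A"
    using card_pos prod_nonneg[of A x] assms(3)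
    by (cases "prod x A = 0") (simp_all add: powr_realpow[symmetric] powr_powr)
  also have "\<dots> \<le> (s / card A) ^ card A"
    by (rule power_mono[OF root_le]) simp
  finally show ?thesis .
qed

lemma sum_card_filter_swap:
  assumes "finite A" "finite B"
  shows "(\<Sum>a\<in>A. card {b\<in>B. P a b}) = (\<Sum>b\<in>B. card {a\<in>A. P a b})"
proof -
  have "(\<Sum>a\<in>A. card {b\<in>B. P a b}) = (\<Sum>a\<in>A. \<Sum>b\<in>B. of_bool (P a b))"
    using assms by (simp add: Int_def conj_commute)
  also have "\<dots> = (\<Sum>b\<in>B. \<Sum>a\<in>A. of_bool (P a b))"
    by (rule sum.swap)
  also have "\<dots> = (\<Sum>b\<in>B. card {a\<in>A. P a b})"
    using assms by (simp add: Int_def conj_commute)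
  finally show ?thesis .
qed

lemma card_filter_ge_mult_le_sum:
  fixes g :: "'a \<Rightarrow> real"
  assumes "finite A" "\<And>a. a \<in> A \<Longrightarrow> g a \<ge> 0"
  shows "real (card {a\<in>A. c \<le> g a}) * c \<le> (\<Sum>a\<in>A. g a)"
proof -
  have "real (card {a\<in>A. c \<le> g a}) * c = (\<Sum>a\<in>{a\<in>A. c \<le> g a}. c)" by simp
  also have "\<dots> \<le> (\<Sum>a\<in>{a\<in>A. c \<le> g a}. g a)" by (rule sum_mono) simp
  also have "\<dots> \<le> (\<Sum>a\<in>A. g a)" using assms by (intro sum_mono2) auto
  finally show ?thesis .
qed

lemma card_filter_bij_betw:
  assumes "bij_betw g A A"
  shows "card {a\<in>A. P (g a)} = card {a\<in>A. P a}"
proof -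
  have "bij_betw g {a\<in>A. P (g a)} {a\<in>A. P a}"
    using assms by (auto simp: bij_betw_def inj_on_def image_iff)
  then show ?thesis by (rule bij_betw_same_card)
qed

lemma bij_betw_diff_mod:
  "bij_betw (\<lambda>v. nat ((int u - int v) mod int n)) {0..<n} {0..<n}"
proof -
  let ?g = "\<lambda>v. nat ((int u - int v) mod int n)"
  have involution: "\<forall>v\<in>{0..<n}. ?g (?g v) = v"
  proof
    fix v assume "v \<in> {0..<n}"
    then have "?g (?g v) = nat ((int u - (int u - int v)) mod int n)"
      by (simp add: mod_diff_right_eq)
    also have "\<dots> = v" using \<open>v \<in> {0..<n}\<close> by simp
    finally show "?g (?g v) = v" .
  qed
  have maps_to: "?g ` {0..<n} \<subseteq> {0..<n}"
    by (auto simp: nat_less_iff)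
  show ?thesis
    using involution involution maps_to maps_to by (rule bij_betw_byWitness)
qed

lemma finite_shift_vectors: "finite (shift_vectors l n)"
  by (simp add: shift_vectors_def finite_PiE)

lemma card_shift_vectors: "card (shift_vectors l n) = n ^ l"
  by (simp add: shift_vectors_def card_PiE)

lemma card_shift_vectors_block_subset:
  "card {i \<in> shift_vectors l n. eq_block l k n i u \<subseteq> A} =
     (if x_pos l k n u \<in> A then (\<Prod>j\<in>{0..<l}. card {w\<in>{0..<n}. y_pos l k n j w \<in> A}) else 0)"
proof (cases "x_pos l k n u \<in> A")
  case True
  let ?shift = "\<lambda>v. nat ((int u - int v) mod int n)"
  have "{i \<in> shift_vectors l n. eq_block l k n i u \<subseteq> A} =
      PiE {0..<l} (\<lambda>j. {v\<in>{0..<n}. y_pos l k n j (?shift v) \<in> A})"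
    using True by (auto simp: shift_vectors_def eq_block_def PiE_iff extensional_def)
  then have "card {i \<in> shift_vectors l n. eq_block l k n i u \<subseteq> A} =
      (\<Prod>j\<in>{0..<l}. card {v\<in>{0..<n}. y_pos l k n j (?shift v) \<in> A})"
    by (simp add: card_PiE)
  also have "\<dots> = (\<Prod>j\<in>{0..<l}. card {w\<in>{0..<n}. y_pos l k n j w \<in> A})"
    by (intro prod.cong refl card_filter_bij_betw bij_betw_diff_mod)
  finally show ?thesis using True by simp
next
  case False
  then show ?thesis by (simp add: eq_block_def)
qed

lemma sum_card_y_pos_le:
  "(\<Sum>j\<in>{0..<l}. card {w\<in>{0..<n}. y_pos l k n j w \<in> A}) \<le> card {p \<in> A. p < l * k + (l + 1) * n}"
proof -
  let ?Y = "SIGMA j:{0..<l}. {w\<in>{0..<n}. y_pos l k n j w \<in> A}"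
  let ?y = "\<lambda>(j, w). y_pos l k n j w"
  have "inj_on ?y ?Y"
  proof (rule inj_onI)
    fix p q
    assume "p \<in> ?Y" "q \<in> ?Y" "?y p = ?y q"
    moreover obtain j w j' w' where "p = (j, w)" "q = (j', w')"
      by fastforce
    ultimately have "w < n" "w' < n" "j * n + w = j' * n + w'"
      by (simp_all add: y_pos_def)
    then have "(j * n + w) div n = (j' * n + w') div n" "(j * n + w) mod n = (j' * n + w') mod n"
      by simp_all
    with \<open>w < n\<close> \<open>w' < n\<close> show "p = q"
      using \<open>p = (j, w)\<close> \<open>q = (j', w')\<close> by simp
  qed
  moreover have "?y ` ?Y \<subseteq> {p \<in> A. p < l * k + (l + 1) * n}"
  proof (rule image_subsetI)
    fix p
    assume "p \<in> ?Y"
    moreover obtain j w where "p = (j, w)"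
      by fastforce
    ultimately have "j < l" "w < n" "y_pos l k n j w \<in> A"
      by simp_all
    have "j * n + w < (j + 1) * n" using \<open>w < n\<close> by simp
    also have "\<dots> \<le> l * n" using \<open>j < l\<close> by (intro mult_right_mono) simp_all
    finally show "?y p \<in> {p \<in> A. p < l * k + (l + 1) * n}"
      using \<open>p = (j, w)\<close> \<open>y_pos l k n j w \<in> A\<close> by (simp add: y_pos_def)
  qed
  ultimately have "card ?Y \<le> card {p \<in> A. p < l * k + (l + 1) * n}"
    by (intro card_inj_on_le) simp_all
  then show ?thesis
    by simp
qed

lemma card_shift_vectors_block_subset_le:
  assumes "l \<ge> 1" and "real (card {p \<in> A. p < l * k + (l + 1) * n}) \<le> t"
  shows "real (card {i \<in> shift_vectors l n. eq_block l k n i u \<subseteq> A}) \<le> (t / l) ^ l"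
proof (cases "x_pos l k n u \<in> A")
  case True
  have "real (\<Sum>j\<in>{0..<l}. card {w\<in>{0..<n}. y_pos l k n j w \<in> A}) \<le> t"
    using of_nat_mono[OF sum_card_y_pos_le, where 'a = real] assms(2) by (rule order_trans)
  then have "(\<Prod>j\<in>{0..<l}. real (card {w\<in>{0..<n}. y_pos l k n j w \<in> A})) \<le> (t / l) ^ l"
    using prod_le_mean_power[of "{0..<l}"] assms(1) by simp
  then show ?thesis
    using True by (simp add: card_shift_vectors_block_subset)
next
  case False
  have "t \<ge> 0" using assms(2) of_nat_0_le_iff order_trans by blast
  then show ?thesis
    using False by (simp add: card_shift_vectors_block_subset)
qed

lemma card_covered_shift_vectors_le:
  assumes "local_fun d N m (l * k + (l + 1) * n) f" and "u < n" and "l \<ge> 1" and "t \<ge> 0"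
    and "\<And>c. c < m \<Longrightarrow> c \<notin> S \<Longrightarrow>
           real (card {p. p < l * k + (l + 1) * n \<and> affects N m f c p}) \<le> t"
  shows "real (card {i \<in> shift_vectors l n. covered N m f S (eq_block l k n i u)}) \<le> d * (t / l) ^ l"
proof -
  define C where "C = {c. c < m \<and> c \<notin> S \<and> affects N m f c (x_pos l k n u)}"
  define shifts_within where
    "shifts_within c = {i \<in> shift_vectors l n. eq_block l k n i u \<subseteq> {p. affects N m f c p}}" for c
  have "finite C" by (simp add: C_def)
  have "x_pos l k n u < l * k + (l + 1) * n" using assms(2) by (simp add: x_pos_def)
  then have "card {c. affects N m f c (x_pos l k n u)} \<le> d"
    using assms(1) by (simp add: local_fun_def)
  moreover have "card C \<le> card {c. affects N m f c (x_pos l k n u)}"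
    by (rule card_mono, rule finite_subset[of _ "{..<m}"]) (auto simp: affects_def C_def)
  ultimately have "card C \<le> d" by linarith
  let ?covered_shifts = "{i \<in> shift_vectors l n. covered N m f S (eq_block l k n i u)}"
  have "?covered_shifts \<subseteq> (\<Union>c\<in>C. shifts_within c)"
    by (auto simp: covered_def C_def shifts_within_def eq_block_def)
  then have "card ?covered_shifts \<le> card (\<Union>c\<in>C. shifts_within c)"
    using \<open>finite C\<close> finite_shift_vectors by (intro card_mono) (auto simp: shifts_within_def)
  also have "\<dots> \<le> (\<Sum>c\<in>C. card (shifts_within c))"
    using \<open>finite C\<close> by (rule card_UN_le)
  finally have "real (card ?covered_shifts) \<le> (\<Sum>c\<in>C. real (card (shifts_within c)))"
    by (simp only: of_nat_sum[symmetric] of_nat_le_iff)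
  also have "\<dots> \<le> (\<Sum>c\<in>C. (t / l) ^ l)"
  proof (rule sum_mono)
    fix c assume "c \<in> C"
    have "{p \<in> {p. affects N m f c p}. p < l * k + (l + 1) * n} =
        {p. p < l * k + (l + 1) * n \<and> affects N m f c p}"
      by auto
    then show "real (card (shifts_within c)) \<le> (t / l) ^ l"
      using \<open>c \<in> C\<close> assms(3,5) unfolding shifts_within_def C_def
      by (intro card_shift_vectors_block_subset_le) auto
  qed
  also have "\<dots> \<le> d * (t / l) ^ l"
    using \<open>card C \<le> d\<close> \<open>t \<ge> 0\<close> by (simp add: mult_right_mono)
  finally show ?thesis .
qed

theorem claim4:
  fixes m d l n k N :: nat and t :: real
    and f :: "(nat \<Rightarrow> nat) \<Rightarrow> nat \<Rightarrow> bool" and S :: "nat set"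
  assumes "m \<ge> 1" and "d \<ge> 1" and "l \<ge> 1"
    and "n = 2 ^ k" and "n \<ge> 2"
    and "N \<ge> 2" and "t > 0"
    and "local_fun d N m (l * k + (l + 1) * n) f"
    and "S = {c. c < m \<and>
               (real (card {p. p < l * k + (l + 1) * n \<and> affects N m f c p}) > t
                \<or> (\<exists>p < l * k. affects N m f c p))}"
  shows "real (card {i \<in> shift_vectors l n. bad_shift N m f S l k n i}) / real (card (shift_vectors l n))
           \<le> 4 * real d * (t / (real l * real n)) ^ l"
proof -
  let ?V = "shift_vectors l n"
  let ?covered = "\<lambda>i u. covered N m f S (eq_block l k n i u)"
  let ?bad = "real (card {i \<in> ?V. bad_shift N m f S l k n i})"
  have few_bits: "real (card {p. p < l * k + (l + 1) * n \<and> affects N m f c p}) \<le> t"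
    if "c < m" "c \<notin> S" for c
    using that assms(9) by auto
  have "?bad * (n / 4) \<le> (\<Sum>i\<in>?V. real (card {u\<in>{0..<n}. ?covered i u}))"
    unfolding bad_shift_def using finite_shift_vectors by (rule card_filter_ge_mult_le_sum) simp
  also have "\<dots> = (\<Sum>u\<in>{0..<n}. real (card {i\<in>?V. ?covered i u}))"
    by (simp only: of_nat_sum[symmetric] sum_card_filter_swap[OF finite_shift_vectors finite_atLeastLessThan])
  also have "\<dots> \<le> (\<Sum>u\<in>{0..<n}. d * (t / l) ^ l)"
    using assms(3,7,8) few_bits by (intro sum_mono card_covered_shift_vectors_le) auto
  also have "\<dots> = n * (d * (t / l) ^ l)"
    by simp
  finally have "n * (?bad / 4) \<le> n * (d * (t / l) ^ l)"
    by (simp add: algebra_simps)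
  then have "?bad \<le> 4 * d * (t / l) ^ l"
    using assms(5) by (auto dest: mult_left_le_imp_le)
  then have "?bad / real (card ?V) \<le> 4 * d * (t / l) ^ l / n ^ l"
    by (simp add: card_shift_vectors divide_right_mono)
  also have "\<dots> = 4 * real d * (t / (real l * real n)) ^ l"
    by (simp add: power_divide power_mult_distrib)
  finally show ?thesis .
qed

end
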